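(* Let $J>h>0$ and $\sigma\in\mathcal X$. (i) If some cluster or plus strip of $\sigma$ has an internal angle $\frac53\pi$ or an internal angle $\frac13\pi$, then $V_\sigma=0$; in particular $\sigma\notin\mathcal X_0$. (ii) If some cluster or plus strip of $\sigma$ has an internal angle $\frac43\pi$, then $V_\sigma\le J-h$; in particular $\sigma\notin\mathcal X_{J-h}$.
   Context: Let $\mathbb{T}^2$ denote the triangular lattice embedded in $\mathbb{R}^2$ and $\mathbb{H}^2$ its dual, the hexagonal lattice; each vertex $i$ of $\mathbb{H}^2$ is the centre of a unique closed triangular face of $\mathbb{T}^2$ (the face centred at $i$), and $d$ denotes the graph distance on $\mathbb{H}^2$, so $d(i,j)=1$ iff the faces centred at $i$ and $j$ share an edge. Fix an integer $L\ge1$ and let $\Lambda\subset\mathbb{H}^2$ be the set of sites in a parallelogram of side length $L$ cut along two coordinate axes of $\mathbb{T}^2$, with periodic boundary conditions; thus $\Lambda$ is a discrete torus with $|\Lambda|=2L^2$ sites, each having 3 nearest neighbours. Let $\mathcal X=\{-1,+1\}^\Lambda$ and let $\underline{+1}$, $\underline{-1}$ be the configurations with all spins $+1$, resp. $-1$. For $J,h>0$ the Hamiltonian is $H(\sigma)=-\frac J2\sum_{\{i,j\}\subset\Lambda:\,d(i,j)=1}\sigma(i)\sigma(j)-\frac h2\sum_{i\in\Lambda}\sigma(i)$ (sum over unordered nearest-neighbour pairs), so that $H(\sigma)-H(\underline{-1})=J|\gamma(\sigma)|-hN^+(\sigma)$, where $|\gamma(\sigma)|$ is the number of nearest-neighbour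 pairs carrying opposite spins and $N^+(\sigma)$ is the number of sites with spin $+1$. For $x\in\Lambda$, $\sigma^{(x)}$ denotes $\sigma$ with the spin at $x$ reversed. Metastability notions: a path is a finite sequence $(\omega_1,\dots,\omega_n)$ in $\mathcal X$ with each $\omega_{k+1}=\omega_k^{(x)}$ for some $x\in\Lambda$; $\Theta(\sigma,\eta)$ is the set of paths from $\sigma$ to $\eta$; $\Phi(\sigma,\eta)=\min_{\omega\in\Theta(\sigma,\eta)}\max_{\zeta\in\omega}H(\zeta)$ and $\Phi(A,B)=\min_{\sigma\in A,\eta\in B}\Phi(\sigma,\eta)$. $\mathcal I_\sigma=\{\eta: H(\eta)<H(\sigma)\}$; the stability level is $V_\sigma=\Phi(\sigma,\mathcal I_\sigma)-H(\sigma)$ ($V_\sigma=\infty$ if $\mathcal I_\sigma=\emptyset$); $\mathcal X_V=\{\sigma\in\mathcal X: V_\sigma>V\}$. Clusters: for $\sigma\in\mathcal X$ let $C(\sigma)$ be the union (on the torus) of the closed faces centred at the sites $i$ with $\sigma(i)=+1$. A maximal connected component of $C(\sigma)$ is called a plus strip if it wraps around the torus and a cluster otherwise. A cluster or plus strip $C$ has an internal angle $k\pi/3$ ($k\in\{1,\dots,5\}$) at a vertex $v$ of $\mathbb T^2$ if exactly $k$ of the six faces of $\mathbb T^2$ incident to $v$ belong to $C$ and these $k$ faces are consecutive in the cyclic order around $v$. *)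

theory Defs
  imports Complex_Main "HOL-Library.Extended_Real"
begin

text \<open>Sites of the hexagonal lattice = triangular faces of the triangular lattice.
  A face is (a,b,True) = up-triangle with vertices (a,b),(a+1,b),(a,b+1) and
  (a,b,False) = down-triangle with vertices (a+1,b),(a,b+1),(a+1,b+1), in the
  basis e1=(1,0), e2=(1/2,sqrt 3/2). Coordinates are taken modulo L (torus).\<close>

type_synonym site = "int \<times> int \<times> bool"
type_synonym vertex = "int \<times> int"
type_synonym config = "site \<Rightarrow> int"

definition wrap :: "nat \<Rightarrow> site \<Rightarrow> site" where
  "wrap L x = (case x of (a, b, u) \<Rightarrow> (a mod int L, b mod int L, u))"

definition wrapv :: "nat \<Rightarrow> vertex \<Rightarrow> vertex" where
  "wrapv L v = (case v of (a, b) \<Rightarrow> (a mod int L, b mod int L))"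

definition Lam :: "nat \<Rightarrow> site set" where
  "Lam L = {(a, b, u). 0 \<le> a \<and> a < int L \<and> 0 \<le> b \<and> b < int L}"

definition Verts :: "nat \<Rightarrow> vertex set" where
  "Verts L = {(a, b). 0 \<le> a \<and> a < int L \<and> 0 \<le> b \<and> b < int L}"

definition face_verts :: "nat \<Rightarrow> site \<Rightarrow> vertex set" where
  "face_verts L x = (case x of (a, b, u) \<Rightarrow>
     (if u then wrapv L ` {(a, b), (a + 1, b), (a, b + 1)}
      else wrapv L ` {(a + 1, b), (a, b + 1), (a + 1, b + 1)}))"

text \<open>Nearest neighbours (d(i,j)=1): the faces sharing an edge with a given face.\<close>
definition nbrs :: "nat \<Rightarrow> site \<Rightarrow> site set" where
  "nbrs L x = (case x of (a, b, u) \<Rightarrow>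
     (if u then wrap L ` {(a, b, False), (a - 1, b, False), (a, b - 1, False)}
      else wrap L ` {(a, b, True), (a + 1, b, True), (a, b + 1, True)}))"

definition adj :: "nat \<Rightarrow> site \<Rightarrow> site \<Rightarrow> bool" where
  "adj L x y \<longleftrightarrow> x \<in> Lam L \<and> y \<in> Lam L \<and> y \<in> nbrs L x"

definition nn_pairs :: "nat \<Rightarrow> site set set" where
  "nn_pairs L = {{x, y} | x y. adj L x y}"

text \<open>Configuration space: spins in {-1,+1} on Lambda, fixed to 1 outside (irrelevant).\<close>
definition Xs :: "nat \<Rightarrow> config set" where
  "Xs L = {\<sigma>. (\<forall>x\<in>Lam L. \<sigma> x = 1 \<or> \<sigma> x = -1) \<and> (\<forall>x. x \<notin> Lam L \<longrightarrow> \<sigma> x = 1)}"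

definition plus_conf :: "nat \<Rightarrow> config" where
  "plus_conf L = (\<lambda>x. 1)"

definition minus_conf :: "nat \<Rightarrow> config" where
  "minus_conf L = (\<lambda>x. if x \<in> Lam L then -1 else 1)"

definition Ham :: "nat \<Rightarrow> real \<Rightarrow> real \<Rightarrow> config \<Rightarrow> real" where
  "Ham L J h \<sigma> = - (J / 2) * (\<Sum>e\<in>nn_pairs L. (\<Prod>x\<in>e. real_of_int (\<sigma> x)))
                 - (h / 2) * (\<Sum>x\<in>Lam L. real_of_int (\<sigma> x))"

definition flip :: "config \<Rightarrow> site \<Rightarrow> config" where
  "flip \<sigma> x = \<sigma>(x := - \<sigma> x)"

definition is_path :: "nat \<Rightarrow> config list \<Rightarrow> bool" where
  "is_path L \<omega> \<longleftrightarrow> \<omega> \<noteq> [] \<and>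
     (\<forall>k. Suc k < length \<omega> \<longrightarrow> (\<exists>x\<in>Lam L. \<omega> ! Suc k = flip (\<omega> ! k) x))"

definition Theta :: "nat \<Rightarrow> config \<Rightarrow> config \<Rightarrow> config list set" where
  "Theta L \<sigma> \<eta> = {\<omega>. is_path L \<omega> \<and> hd \<omega> = \<sigma> \<and> last \<omega> = \<eta>}"

definition Phi :: "nat \<Rightarrow> real \<Rightarrow> real \<Rightarrow> config \<Rightarrow> config \<Rightarrow> real" where
  "Phi L J h \<sigma> \<eta> = Min {Max (Ham L J h ` set \<omega>) | \<omega>. \<omega> \<in> Theta L \<sigma> \<eta>}"

definition PhiSet :: "nat \<Rightarrow> real \<Rightarrow> real \<Rightarrow> config set \<Rightarrow> config set \<Rightarrow> real" where
  "PhiSet L J h A B = Min {Phi L J h \<sigma> \<eta> | \<sigma> \<eta>. \<sigma> \<in> A \<and> \<eta> \<in> B}"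

definition Iset :: "nat \<Rightarrow> real \<Rightarrow> real \<Rightarrow> config \<Rightarrow> config set" where
  "Iset L J h \<sigma> = {\<eta> \<in> Xs L. Ham L J h \<eta> < Ham L J h \<sigma>}"

definition stab :: "nat \<Rightarrow> real \<Rightarrow> real \<Rightarrow> config \<Rightarrow> ereal" where
  "stab L J h \<sigma> = (if Iset L J h \<sigma> = {} then \<infinity>
      else ereal (PhiSet L J h {\<sigma>} (Iset L J h \<sigma>) - Ham L J h \<sigma>))"

definition Xabove :: "nat \<Rightarrow> real \<Rightarrow> real \<Rightarrow> real \<Rightarrow> config set" where
  "Xabove L J h V = {\<sigma> \<in> Xs L. stab L J h \<sigma> > ereal V}"

text \<open>Clusters and plus strips: maximal connected components of the union of the
  closed faces centred at plus sites. Two closed faces of the (torus) triangulation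
  intersect iff they share a vertex, so components are the classes of the
  vertex-sharing relation restricted to plus sites.\<close>
definition plus_sites :: "nat \<Rightarrow> config \<Rightarrow> site set" where
  "plus_sites L \<sigma> = {x \<in> Lam L. \<sigma> x = 1}"

definition touch_rel :: "nat \<Rightarrow> config \<Rightarrow> (site \<times> site) set" where
  "touch_rel L \<sigma> = {(x, y). x \<in> plus_sites L \<sigma> \<and> y \<in> plus_sites L \<sigma> \<and>
                      face_verts L x \<inter> face_verts L y \<noteq> {}}"

definition components :: "nat \<Rightarrow> config \<Rightarrow> site set set" where
  "components L \<sigma> = {{y. (x, y) \<in> (touch_rel L \<sigma>)\<^sup>*} | x. x \<in> plus_sites L \<sigma>}"

text \<open>The six faces around vertex (a,b), in cyclic (counterclockwise) order.\<close>
definition face_around :: "nat \<Rightarrow> vertex \<Rightarrow> nat \<Rightarrow> site" where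
  "face_around L v i = (case v of (a, b) \<Rightarrow>
     [wrap L (a, b, True), wrap L (a - 1, b, False), wrap L (a - 1, b, True),
      wrap L (a - 1, b - 1, False), wrap L (a, b - 1, True), wrap L (a, b - 1, False)] ! i)"

text \<open>C has internal angle k*pi/3 at vertex v: exactly k of the six incident faces
  belong to C and they are consecutive in the cyclic order.\<close>
definition has_angle :: "nat \<Rightarrow> site set \<Rightarrow> vertex \<Rightarrow> nat \<Rightarrow> bool" where
  "has_angle L C v k \<longleftrightarrow> v \<in> Verts L \<and> 1 \<le> k \<and> k \<le> 5 \<and>
     (let S = {i \<in> {0..<6}. face_around L v i \<in> C} in
        card S = k \<and> (\<exists>s<6. S = (\<lambda>j. (s + j) mod 6) ` {0..<k}))"

end

theory Submission
  imports Defs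
begin

(* Each bound is witnessed by a short path of single spin flips leaving sigma downhill.
   Label the six faces around the corner vertex cyclically, starting where the corner's
   arc of plus faces begins; the faces next to the arc are minus, since they touch the
   cluster.  At an angle 5pi/3 the single missing face is a minus site with two plus
   neighbours, so flipping it changes the energy by at most -J-h; at an angle pi/3 the
   lone plus face has two minus neighbours and flipping it changes the energy by at most
   -J+h.  At an angle 4pi/3, flipping one missing face costs at most J-h and leaves the
   other one with two plus neighbours, so the second flip brings the energy below H(sigma).
   As the stability level is never negative, the claims follow. *)

section \<open>The faces around a vertex of the torus\<close>

lemma wrap_in_Lam: "L \<ge> 1 \<Longrightarrow> wrap L x \<in> Lam L"
  by (cases x) (auto simp: wrap_def Lam_def)

lemma wrap_Lam: "x \<in> Lam L \<Longrightarrow> wrap L x = x"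
  by (cases x) (auto simp: wrap_def Lam_def)

lemma nbrs_wrap: "nbrs L (wrap L x) = nbrs L x"
  by (cases x) (auto simp: wrap_def nbrs_def mod_simps)

lemma nbrs_sym: "y \<in> nbrs L x \<Longrightarrow> wrap L x \<in> nbrs L y"
proof -
  assume y: "y \<in> nbrs L x"
  obtain a b u where x: "x = (a, b, u)" by (cases x) auto
  show ?thesis
  proof (cases u)
    case True
    then have "y \<in> wrap L ` {(a, b, False), (a - 1, b, False), (a, b - 1, False)}"
      using y x by (simp add: nbrs_def)
    then show ?thesis using x True by (auto simp: nbrs_wrap) (auto simp: nbrs_def)
  next
    case False
    then have "y \<in> wrap L ` {(a, b, True), (a + 1, b, True), (a, b + 1, True)}"
      using y x by (simp add: nbrs_def)
    then show ?thesis using x False by (auto simp: nbrs_wrap) (auto simp: nbrs_def)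
  qed
qed

lemma nbrs_not_self: "y \<in> nbrs L x \<Longrightarrow> y \<noteq> x"
  by (cases x) (auto simp: nbrs_def wrap_def split: if_splits)

lemma nbrs_subset_Lam: "L \<ge> 1 \<Longrightarrow> nbrs L x \<subseteq> Lam L"
  by (cases x) (auto simp: nbrs_def wrap_in_Lam)

lemma finite_nbrs: "finite (nbrs L x)"
  by (cases x) (auto simp: nbrs_def)

lemma card_nbrs_le: "card (nbrs L x) \<le> 3"
  by (cases x) (auto simp: nbrs_def intro!: order.trans[OF card_image_le] card_insert_le_m1)

lemma mod6_cases:
  obtains "i mod 6 = 0" | "i mod 6 = 1" | "i mod 6 = 2" | "i mod 6 = 3" | "i mod 6 = 4" | "i mod 6 = (5::nat)"
  by linarith

lemma face_around_in_Lam: "L \<ge> 1 \<Longrightarrow> face_around L v (i mod 6) \<in> Lam L"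
  by (cases v, cases i rule: mod6_cases) (auto simp: face_around_def wrap_in_Lam)

lemma face_around_Suc_nbr: "face_around L v (Suc i mod 6) \<in> nbrs L (face_around L v (i mod 6))"
  by (cases v, cases i rule: mod6_cases)
    (auto simp: face_around_def nbrs_wrap mod_Suc, auto simp: nbrs_def)

lemma face_around_nbr_Suc: "face_around L v (i mod 6) \<in> nbrs L (face_around L v (Suc i mod 6))"
  by (cases v, cases i rule: mod6_cases)
    (auto simp: face_around_def nbrs_wrap mod_Suc, auto simp: nbrs_def wrap_def mod_simps)

lemma face_verts_wrap: "face_verts L (wrap L x) = face_verts L x"
  by (cases x) (auto simp: wrap_def face_verts_def wrapv_def mod_simps)

lemma vertex_in_face_around: "v \<in> Verts L \<Longrightarrow> v \<in> face_verts L (face_around L v (i mod 6))"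
  by (cases v, cases i rule: mod6_cases)
     (auto simp: face_around_def face_verts_wrap, auto simp: face_verts_def wrapv_def Verts_def)

lemma mod_diff1_eq_iff: "((a::int) - 1) mod int L = a mod int L \<longleftrightarrow> L = 1"
  by (auto simp: mod_eq_dvd_iff)

lemma face_around_add2_eq_iff:
  "face_around L v ((i + 2) mod 6) = face_around L v (i mod 6) \<longleftrightarrow> L = 1"
proof -
  have i2: "(i + 2) mod 6 = (i mod 6 + 2) mod 6" by presburger
  show ?thesis unfolding i2
  proof
    show "face_around L v ((i mod 6 + 2) mod 6) = face_around L v (i mod 6) \<Longrightarrow> L = 1"
      by (cases v, cases i rule: mod6_cases)
        (auto simp: face_around_def wrap_def mod_diff1_eq_iff
          eq_commute[of "_ mod int L" "(_ - 1) mod int L"])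
    show "L = 1 \<Longrightarrow> face_around L v ((i mod 6 + 2) mod 6) = face_around L v (i mod 6)"
      by (cases v, cases i rule: mod6_cases) (auto simp: face_around_def wrap_def)
  qed
qed

lemma plus_site_of_component:
  assumes "C \<in> components L \<sigma>" and "y \<in> C" shows "y \<in> plus_sites L \<sigma>"
proof -
  obtain x where "(x, y) \<in> (touch_rel L \<sigma>)\<^sup>*" and "x \<in> plus_sites L \<sigma>"
    using assms by (auto simp: components_def)
  then show ?thesis by (cases rule: rtranclE) (auto simp: touch_rel_def)
qed

lemma component_minus_if_touching:
  assumes C: "C \<in> components L \<sigma>" and "\<sigma> \<in> Xs L" and "y \<in> C" and "z \<in> Lam L" and "z \<notin> C"
    and touch: "face_verts L y \<inter> face_verts L z \<noteq> {}"
  shows "\<sigma> z = -1"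
proof (rule ccontr)
  assume "\<sigma> z \<noteq> -1"
  then have "z \<in> plus_sites L \<sigma>" using assms unfolding Xs_def plus_sites_def by blast
  then have "(y, z) \<in> touch_rel L \<sigma>"
    using plus_site_of_component[OF C \<open>y \<in> C\<close>] touch by (simp add: touch_rel_def)
  then have "z \<in> C" using C \<open>y \<in> C\<close> by (auto simp: components_def intro: rtrancl_into_rtrancl)
  with \<open>z \<notin> C\<close> show False ..
qed

lemma mod6_add_inj:
  assumes "j < 6" "j' < 6" "(s + j) mod 6 = (s + j') mod (6::nat)" shows "j = j'"
proof -
  have "6 dvd j - j'" "6 dvd j' - j"
    using mod_eq_dvd_iff_nat[of "s + j'" "s + j" 6] mod_eq_dvd_iff_nat[of "s + j" "s + j'" 6] assms(3)
    by (cases "j' \<le> j"; simp)+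
  then show ?thesis using assms(1,2) by (auto dest!: dvd_imp_le)
qed

lemma has_angle_arc:
  assumes "has_angle L C v k"
  shows "v \<in> Verts L" "\<exists>s. \<forall>j<6. face_around L v ((s + j) mod 6) \<in> C \<longleftrightarrow> j < k"
proof -
  show "v \<in> Verts L" using assms by (simp add: has_angle_def)
  obtain s where "k \<le> 5"
    and S: "{i \<in> {0..<6}. face_around L v i \<in> C} = (\<lambda>j. (s + j) mod 6) ` {0..<k}"
    using assms unfolding has_angle_def Let_def by blast
  have "face_around L v ((s + j) mod 6) \<in> C \<longleftrightarrow> j < k" if "j < 6" for j
  proof -
    have "face_around L v ((s + j) mod 6) \<in> C \<longleftrightarrow> (s + j) mod 6 \<in> (\<lambda>j. (s + j) mod 6) ` {0..<k}"
      by (simp add: S[symmetric])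
    also have "\<dots> \<longleftrightarrow> j < k"
    proof
      assume "(s + j) mod 6 \<in> (\<lambda>j. (s + j) mod 6) ` {0..<k}"
      then obtain i where "i < k" "(s + j) mod 6 = (s + i) mod 6" by auto
      with mod6_add_inj[OF that, of i s] \<open>k \<le> 5\<close> show "j < k" by simp
    qed auto
    finally show ?thesis .
  qed
  then show "\<exists>s. \<forall>j<6. face_around L v ((s + j) mod 6) \<in> C \<longleftrightarrow> j < k" by blast
qed

section \<open>Energy change under a single spin flip\<close>

lemma finite_Lam: "finite (Lam L)"
proof -
  have "Lam L \<subseteq> {0..<int L} \<times> {0..<int L} \<times> UNIV" by (auto simp: Lam_def)
  then show ?thesis by (rule finite_subset) auto
qed

lemma finite_nn_pairs: "finite (nn_pairs L)"
proof -
  have "nn_pairs L \<subseteq> (\<lambda>(x, y). {x, y}) ` (Lam L \<times> Lam L)"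
    by (auto simp: nn_pairs_def adj_def)
  then show ?thesis using finite_Lam finite_subset by blast
qed

lemma nn_pairs_containing:
  assumes "L \<ge> 1" and "x \<in> Lam L"
  shows "{e \<in> nn_pairs L. x \<in> e} = (\<lambda>y. {x, y}) ` nbrs L x"
proof (intro equalityI subsetI)
  fix e assume "e \<in> {e \<in> nn_pairs L. x \<in> e}"
  then obtain p q where e: "e = {p, q}" "x \<in> e" and pq: "p \<in> Lam L" "q \<in> Lam L" "q \<in> nbrs L p"
    by (auto simp: nn_pairs_def adj_def)
  have "p \<in> nbrs L q" using nbrs_sym[OF pq(3)] wrap_Lam[OF pq(1)] by simp
  then show "e \<in> (\<lambda>y. {x, y}) ` nbrs L x" using e pq(3) by auto
next
  fix e assume "e \<in> (\<lambda>y. {x, y}) ` nbrs L x"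
  then obtain y where "y \<in> nbrs L x" "e = {x, y}" by blast
  then show "e \<in> {e \<in> nn_pairs L. x \<in> e}"
    using assms nbrs_subset_Lam unfolding nn_pairs_def adj_def by blast
qed

lemma sum_nn_pairs_containing:
  assumes "L \<ge> 1" and "x \<in> Lam L"
  shows "(\<Sum>e\<in>{e \<in> nn_pairs L. x \<in> e}. \<Prod>z\<in>e. real_of_int (\<tau> z))
       = real_of_int (\<tau> x) * (\<Sum>y\<in>nbrs L x. real_of_int (\<tau> y))"
proof -
  have "inj_on (\<lambda>y. {x, y}) (nbrs L x)"
    by (rule inj_onI) (auto simp: doubleton_eq_iff dest: nbrs_not_self)
  then show ?thesis unfolding nn_pairs_containing[OF assms]
    by (auto simp: sum.reindex sum_distrib_left dest: nbrs_not_self intro!: sum.cong)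
qed

lemma sum_nn_pairs_flip:
  assumes "L \<ge> 1" and x: "x \<in> Lam L"
  shows "(\<Sum>e\<in>nn_pairs L. \<Prod>z\<in>e. real_of_int (flip \<sigma> x z))
       = (\<Sum>e\<in>nn_pairs L. \<Prod>z\<in>e. real_of_int (\<sigma> z))
         - 2 * real_of_int (\<sigma> x) * (\<Sum>y\<in>nbrs L x. real_of_int (\<sigma> y))"
proof -
  define P where "P = nn_pairs L"
  define Px where "Px = {e \<in> P. x \<in> e}"
  have split: "(\<Sum>e\<in>P. f e) = (\<Sum>e\<in>Px. f e) + (\<Sum>e\<in>P - Px. f e)" for f :: "site set \<Rightarrow> real"
    using sum.subset_diff[of Px P f] finite_nn_pairs by (simp add: P_def Px_def add.commute)
  have "(\<Sum>e\<in>P - Px. \<Prod>z\<in>e. real_of_int (flip \<sigma> x z)) = (\<Sum>e\<in>P - Px. \<Prod>z\<in>e. real_of_int (\<sigma> z))"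
    by (intro sum.cong prod.cong) (auto simp: Px_def flip_def)
  moreover have "(\<Sum>e\<in>Px. \<Prod>z\<in>e. real_of_int (flip \<sigma> x z))
      = - real_of_int (\<sigma> x) * (\<Sum>y\<in>nbrs L x. real_of_int (\<sigma> y))"
    unfolding Px_def P_def sum_nn_pairs_containing[OF assms]
    by (auto simp: flip_def dest: nbrs_not_self intro!: sum.cong)
  moreover have "(\<Sum>e\<in>Px. \<Prod>z\<in>e. real_of_int (\<sigma> z))
      = real_of_int (\<sigma> x) * (\<Sum>y\<in>nbrs L x. real_of_int (\<sigma> y))"
    unfolding Px_def P_def sum_nn_pairs_containing[OF assms] ..
  ultimately show ?thesis
    using split[of "\<lambda>e. \<Prod>z\<in>e. real_of_int (flip \<sigma> x z)"] split[of "\<lambda>e. \<Prod>z\<in>e. real_of_int (\<sigma> z)"]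
    by (simp add: P_def)
qed

lemma sum_flip:
  assumes "finite A" and "x \<in> A"
  shows "(\<Sum>z\<in>A. real_of_int (flip \<sigma> x z)) = (\<Sum>z\<in>A. real_of_int (\<sigma> z)) - 2 * real_of_int (\<sigma> x)"
proof -
  have "(\<Sum>z\<in>A - {x}. real_of_int (flip \<sigma> x z)) = (\<Sum>z\<in>A - {x}. real_of_int (\<sigma> z))"
    by (rule sum.cong) (auto simp: flip_def)
  then show ?thesis using assms by (simp add: sum.remove flip_def)
qed

lemma Ham_flip:
  assumes "L \<ge> 1" and "x \<in> Lam L"
  shows "Ham L J h (flip \<sigma> x)
       = Ham L J h \<sigma> + real_of_int (\<sigma> x) * (J * (\<Sum>y\<in>nbrs L x. real_of_int (\<sigma> y)) + h)"
  unfolding Ham_def sum_nn_pairs_flip[OF assms] sum_flip[OF finite_Lam assms(2)]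
  by (simp add: algebra_simps)

lemma sum_pm1_ge:
  fixes \<tau> :: "'a \<Rightarrow> int"
  assumes "finite N" "A \<subseteq> N" "\<forall>y\<in>N. \<tau> y = 1 \<or> \<tau> y = -1" "\<forall>y\<in>A. \<tau> y = 1"
  shows "(\<Sum>y\<in>N. real_of_int (\<tau> y)) \<ge> 2 * real (card A) - real (card N)"
proof -
  have "(\<Sum>y\<in>N. real_of_int (\<tau> y)) = real (card A) + (\<Sum>y\<in>N - A. real_of_int (\<tau> y))"
    using assms by (simp add: sum.subset_diff[of A N] add.commute)
  also have "(\<Sum>y\<in>N - A. real_of_int (\<tau> y)) \<ge> - real (card (N - A))"
    using sum_mono[of "N - A" "\<lambda>_. -1 :: real" "\<lambda>y. real_of_int (\<tau> y)"] assms(3) by force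
  moreover have "card (N - A) = card N - card A" "card A \<le> card N"
    using assms(1,2) by (auto simp: card_Diff_subset finite_subset card_mono)
  ultimately show ?thesis by (simp add: of_nat_diff)
qed

lemma sum_pm1_le:
  fixes \<tau> :: "'a \<Rightarrow> int"
  assumes "finite N" "A \<subseteq> N" "\<forall>y\<in>N. \<tau> y = 1 \<or> \<tau> y = -1" "\<forall>y\<in>A. \<tau> y = -1"
  shows "(\<Sum>y\<in>N. real_of_int (\<tau> y)) \<le> real (card N) - 2 * real (card A)"
  using sum_pm1_ge[of N A "\<lambda>y. - \<tau> y"] assms by (force simp: sum_negf)

lemma spin_pm1_nbrs: "L \<ge> 1 \<Longrightarrow> \<sigma> \<in> Xs L \<Longrightarrow> \<forall>y\<in>nbrs L x. \<sigma> y = 1 \<or> \<sigma> y = -1"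
  using nbrs_subset_Lam unfolding Xs_def by blast

lemma Ham_flip_minus_two_plus_nbrs:
  assumes "L \<ge> 1" "\<sigma> \<in> Xs L" "x \<in> Lam L" "\<sigma> x = -1" "0 \<le> J"
    and "p \<in> nbrs L x" "q \<in> nbrs L x" "p \<noteq> q" "\<sigma> p = 1" "\<sigma> q = 1"
  shows "Ham L J h (flip \<sigma> x) \<le> Ham L J h \<sigma> - J - h"
proof -
  have "(\<Sum>y\<in>nbrs L x. real_of_int (\<sigma> y)) \<ge> 2 * real (card {p, q}) - real (card (nbrs L x))"
    using assms spin_pm1_nbrs by (intro sum_pm1_ge finite_nbrs) auto
  then have "J \<le> J * (\<Sum>y\<in>nbrs L x. real_of_int (\<sigma> y))"
    using assms card_nbrs_le[of L x] mult_left_mono[of 1 _ J] by simp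
  then show ?thesis using Ham_flip[OF assms(1,3), of J h \<sigma>] assms(4) by simp
qed

lemma Ham_flip_plus_two_minus_nbrs:
  assumes "L \<ge> 1" "\<sigma> \<in> Xs L" "x \<in> Lam L" "\<sigma> x = 1" "0 \<le> J"
    and "p \<in> nbrs L x" "q \<in> nbrs L x" "p \<noteq> q" "\<sigma> p = -1" "\<sigma> q = -1"
  shows "Ham L J h (flip \<sigma> x) \<le> Ham L J h \<sigma> - J + h"
proof -
  have "(\<Sum>y\<in>nbrs L x. real_of_int (\<sigma> y)) \<le> real (card (nbrs L x)) - 2 * real (card {p, q})"
    using assms spin_pm1_nbrs by (intro sum_pm1_le finite_nbrs) auto
  then have "J * (\<Sum>y\<in>nbrs L x. real_of_int (\<sigma> y)) \<le> - J"
    using assms card_nbrs_le[of L x] mult_left_mono[of _ "-1" J] by simp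
  then show ?thesis using Ham_flip[OF assms(1,3), of J h \<sigma>] assms(4) by simp
qed

lemma Ham_flip_minus_plus_nbr:
  assumes "L \<ge> 1" "\<sigma> \<in> Xs L" "x \<in> Lam L" "\<sigma> x = -1" "0 \<le> J"
    and "p \<in> nbrs L x" "\<sigma> p = 1"
  shows "Ham L J h (flip \<sigma> x) \<le> Ham L J h \<sigma> + J - h"
proof -
  have "(\<Sum>y\<in>nbrs L x. real_of_int (\<sigma> y)) \<ge> 2 * real (card {p}) - real (card (nbrs L x))"
    using assms spin_pm1_nbrs by (intro sum_pm1_ge finite_nbrs) auto
  then have "- J \<le> J * (\<Sum>y\<in>nbrs L x. real_of_int (\<sigma> y))"
    using assms card_nbrs_le[of L x] mult_left_mono[of "-1" _ J] by simp
  then show ?thesis using Ham_flip[OF assms(1,3), of J h \<sigma>] assms(4) by simp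
qed

section \<open>Paths and the stability level\<close>

lemma flip_in_Xs: "\<sigma> \<in> Xs L \<Longrightarrow> x \<in> Lam L \<Longrightarrow> flip \<sigma> x \<in> Xs L"
  by (auto simp: Xs_def flip_def)

lemma finite_Xs: "finite (Xs L)"
proof -
  have "Xs L \<subseteq> {f. \<forall>x. (x \<in> Lam L \<longrightarrow> f x \<in> {1, -1}) \<and> (x \<notin> Lam L \<longrightarrow> f x = 1)}"
    by (auto simp: Xs_def)
  then show ?thesis
    by (rule finite_subset) (rule finite_set_of_finite_funs[OF finite_Lam], simp)
qed

lemma Theta_singleton: "[\<sigma>] \<in> Theta L \<sigma> \<sigma>"
  by (simp add: Theta_def is_path_def)

lemma Theta_Cons_flip:
  assumes "\<omega> \<in> Theta L (flip \<sigma> x) \<eta>" and "x \<in> Lam L"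
  shows "\<sigma> # \<omega> \<in> Theta L \<sigma> \<eta>"
proof -
  have "\<omega> \<noteq> []" and hd: "\<omega> ! 0 = flip \<sigma> x"
    using assms(1) by (auto simp: Theta_def is_path_def hd_conv_nth)
  have "\<exists>y\<in>Lam L. (\<sigma> # \<omega>) ! Suc k = flip ((\<sigma> # \<omega>) ! k) y" if "Suc k < length (\<sigma> # \<omega>)" for k
    using that assms hd by (cases k) (auto simp: Theta_def is_path_def)
  then show ?thesis using assms(1) \<open>\<omega> \<noteq> []\<close> by (simp add: Theta_def is_path_def)
qed

lemma Theta_flip_set:
  assumes "finite D" and "D \<subseteq> Lam L"
  shows "\<exists>\<omega>. \<omega> \<in> Theta L \<sigma> (\<lambda>y. if y \<in> D then - \<sigma> y else \<sigma> y)"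
  using assms
proof (induction D arbitrary: \<sigma> rule: finite_induct)
  case empty
  show ?case using Theta_singleton by auto
next
  case (insert x D)
  then obtain \<omega> where "\<omega> \<in> Theta L (flip \<sigma> x) (\<lambda>y. if y \<in> D then - flip \<sigma> x y else flip \<sigma> x y)"
    by auto
  moreover have "(\<lambda>y. if y \<in> D then - flip \<sigma> x y else flip \<sigma> x y)
      = (\<lambda>y. if y \<in> insert x D then - \<sigma> y else \<sigma> y)"
    using insert.hyps(2) by (auto simp: flip_def)
  ultimately show ?case using Theta_Cons_flip[of \<omega> L \<sigma> x] insert.prems by auto
qed

lemma Theta_nonempty:
  assumes "\<sigma> \<in> Xs L" and "\<eta> \<in> Xs L"
  shows "Theta L \<sigma> \<eta> \<noteq> {}"
proof -
  let ?D = "{x \<in> Lam L. \<sigma> x \<noteq> \<eta> x}"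
  have "\<eta> y = (if y \<in> ?D then - \<sigma> y else \<sigma> y)" for y
  proof (cases "y \<in> Lam L")
    case True
    then have "\<sigma> y \<in> {1, -1}" "\<eta> y \<in> {1, -1}" using assms by (auto simp: Xs_def)
    then show ?thesis using True by auto
  next
    case False
    then have "\<sigma> y = 1" "\<eta> y = 1" using assms unfolding Xs_def by blast+
    then show ?thesis by simp
  qed
  then have "(\<lambda>y. if y \<in> ?D then - \<sigma> y else \<sigma> y) = \<eta>" by auto
  then show ?thesis using Theta_flip_set[of ?D L \<sigma>] finite_Lam by auto
qed

lemma path_in_Xs:
  assumes "is_path L \<omega>" and "hd \<omega> \<in> Xs L"
  shows "set \<omega> \<subseteq> Xs L"
proof -
  have "\<omega> ! k \<in> Xs L" if "k < length \<omega>" for k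
    using that
  proof (induction k)
    case 0
    then show ?case using assms by (simp add: hd_conv_nth is_path_def)
  next
    case (Suc k)
    then show ?case using assms(1) flip_in_Xs unfolding is_path_def by (metis Suc_lessD)
  qed
  then show ?thesis by (auto simp: in_set_conv_nth)
qed

lemma path_heights:
  assumes "\<omega> \<in> Theta L \<sigma> \<eta>" and "\<sigma> \<in> Xs L"
  shows "Max (Ham L J h ` set \<omega>) \<in> Ham L J h ` Xs L" "Ham L J h \<sigma> \<le> Max (Ham L J h ` set \<omega>)"
proof -
  have "\<omega> \<noteq> []" and "hd \<omega> = \<sigma>" and "is_path L \<omega>"
    using assms(1) by (auto simp: Theta_def is_path_def)
  then have "set \<omega> \<subseteq> Xs L" and "\<sigma> \<in> set \<omega>"
    using path_in_Xs assms(2) hd_in_set by blast+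
  have "Max (Ham L J h ` set \<omega>) \<in> Ham L J h ` set \<omega>"
    using \<open>\<omega> \<noteq> []\<close> by (intro Max_in) simp_all
  then show "Max (Ham L J h ` set \<omega>) \<in> Ham L J h ` Xs L" using \<open>set \<omega> \<subseteq> Xs L\<close> by blast
  show "Ham L J h \<sigma> \<le> Max (Ham L J h ` set \<omega>)" using \<open>\<sigma> \<in> set \<omega>\<close> by (intro Max_ge) simp_all
qed

lemma finite_path_heights:
  assumes "\<sigma> \<in> Xs L"
  shows "finite {Max (Ham L J h ` set \<omega>) | \<omega>. \<omega> \<in> Theta L \<sigma> \<eta>}"
proof -
  have "{Max (Ham L J h ` set \<omega>) | \<omega>. \<omega> \<in> Theta L \<sigma> \<eta>} \<subseteq> Ham L J h ` Xs L"
    using path_heights(1)[OF _ assms] by blast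
  then show ?thesis using finite_Xs by (rule finite_subset[OF _ finite_imageI])
qed

lemma Phi_le_path_max:
  assumes "\<omega> \<in> Theta L \<sigma> \<eta>" and "\<sigma> \<in> Xs L"
  shows "Phi L J h \<sigma> \<eta> \<le> Max (Ham L J h ` set \<omega>)"
  unfolding Phi_def using finite_path_heights[OF assms(2), of J h \<eta>]
  by (rule Min_le) (use assms(1) in blast)

lemma Phi_ge:
  assumes "\<sigma> \<in> Xs L" and "\<eta> \<in> Xs L"
  shows "Ham L J h \<sigma> \<le> Phi L J h \<sigma> \<eta>"
  unfolding Phi_def using finite_path_heights[OF assms(1), of J h \<eta>] Theta_nonempty[OF assms]
  by (auto intro: path_heights(2)[OF _ assms(1)])

lemma finite_barriers:
  "finite {Phi L J h \<sigma>' \<eta> | \<sigma>' \<eta>. \<sigma>' \<in> {\<sigma>} \<and> \<eta> \<in> Iset L J h \<sigma>}"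
proof -
  have "finite (Iset L J h \<sigma>)" using finite_Xs by (simp add: Iset_def)
  moreover have "{Phi L J h \<sigma>' \<eta> | \<sigma>' \<eta>. \<sigma>' \<in> {\<sigma>} \<and> \<eta> \<in> Iset L J h \<sigma>}
      \<subseteq> Phi L J h \<sigma> ` Iset L J h \<sigma>" by blast
  ultimately show ?thesis by (rule finite_subset[OF _ finite_imageI, rotated])
qed

lemma stab_nonneg:
  assumes "\<sigma> \<in> Xs L"
  shows "0 \<le> stab L J h \<sigma>"
proof (cases "Iset L J h \<sigma> = {}")
  case False
  have "Ham L J h \<sigma> \<le> PhiSet L J h {\<sigma>} (Iset L J h \<sigma>)"
    unfolding PhiSet_def using finite_barriers False
    by (subst Min_ge_iff) (auto intro: Phi_ge[OF assms] simp: Iset_def)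
  then show ?thesis using False by (simp add: stab_def)
qed (simp add: stab_def)

lemma stab_le_of_path:
  assumes "\<sigma> \<in> Xs L" and \<omega>: "\<omega> \<in> Theta L \<sigma> \<eta>" and "Ham L J h \<eta> < Ham L J h \<sigma>"
    and high: "\<forall>\<zeta>\<in>set \<omega>. Ham L J h \<zeta> \<le> Ham L J h \<sigma> + c"
  shows "stab L J h \<sigma> \<le> ereal c"
proof -
  have "\<omega> \<noteq> []" and "is_path L \<omega>" and "hd \<omega> = \<sigma>" and "last \<omega> = \<eta>"
    using \<omega> by (auto simp: Theta_def is_path_def)
  then have "\<eta> \<in> Xs L" using path_in_Xs assms(1) last_in_set by blast
  then have \<eta>: "\<eta> \<in> Iset L J h \<sigma>" using assms(3) by (simp add: Iset_def)
  have "PhiSet L J h {\<sigma>} (Iset L J h \<sigma>) \<le> Phi L J h \<sigma> \<eta>"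
    unfolding PhiSet_def by (rule Min_le[OF finite_barriers]) (use \<eta> in blast)
  also have "\<dots> \<le> Max (Ham L J h ` set \<omega>)" using Phi_le_path_max[OF \<omega> assms(1)] .
  also have "\<dots> \<le> Ham L J h \<sigma> + c"
    using high \<open>\<omega> \<noteq> []\<close> by (subst Max_le_iff) auto
  finally show ?thesis using \<eta> by (auto simp: stab_def)
qed

lemma stab_eq_0_of_downhill_flip:
  assumes "\<sigma> \<in> Xs L" and "x \<in> Lam L" and "Ham L J h (flip \<sigma> x) < Ham L J h \<sigma>"
  shows "stab L J h \<sigma> = 0"
proof -
  have "[\<sigma>, flip \<sigma> x] \<in> Theta L \<sigma> (flip \<sigma> x)"
    using Theta_Cons_flip[OF Theta_singleton assms(2)] .
  then have "stab L J h \<sigma> \<le> ereal 0" using assms by (intro stab_le_of_path) auto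
  then show ?thesis using stab_nonneg[OF assms(1), of J h] by (simp add: zero_ereal_def)
qed

lemma stab_le_of_two_flips:
  assumes "\<sigma> \<in> Xs L" and "x \<in> Lam L" and "z \<in> Lam L" and "0 \<le> c"
    and "Ham L J h (flip \<sigma> x) \<le> Ham L J h \<sigma> + c"
    and "Ham L J h (flip (flip \<sigma> x) z) < Ham L J h \<sigma>"
  shows "stab L J h \<sigma> \<le> ereal c"
proof -
  have "[\<sigma>, flip \<sigma> x, flip (flip \<sigma> x) z] \<in> Theta L \<sigma> (flip (flip \<sigma> x) z)"
    using Theta_Cons_flip[OF Theta_Cons_flip[OF Theta_singleton assms(3)] assms(2)] .
  then show ?thesis using assms by (intro stab_le_of_path) auto
qed

section \<open>Corners of clusters\<close>

(* f j is the j-th face counterclockwise around a corner vertex, counted from the first of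
   the k consecutive faces that C occupies there.  Faces two steps apart coincide only on
   the 1 x 1 torus, which the corners of angle pi/3, 4pi/3 and 5pi/3 rule out; this is what
   makes the two neighbours used below distinct. *)
locale corner_arc =
  fixes L :: nat and \<sigma> :: config and C :: "site set" and k :: nat and f :: "nat \<Rightarrow> site"
  assumes L: "L \<ge> 1" and \<sigma>: "\<sigma> \<in> Xs L"
    and in_Lam: "\<And>j. f j \<in> Lam L"
    and next_nbr: "\<And>j. f (Suc j) \<in> nbrs L (f j)" and prev_nbr: "\<And>j. f j \<in> nbrs L (f (Suc j))"
    and add2_eq: "\<And>j. f (j + 2) = f j \<longleftrightarrow> L = 1" and period: "\<And>j. f (j + 6) = f j"
    and in_C: "\<And>j. j < 6 \<Longrightarrow> f j \<in> C \<longleftrightarrow> j < k"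
    and plus: "\<And>j. j < k \<Longrightarrow> \<sigma> (f j) = 1"
    and minus: "\<And>j. k \<le> j \<Longrightarrow> j < 6 \<Longrightarrow> \<sigma> (f j) = -1"

lemma has_angle_corner_arc:
  assumes "has_angle L C v k" and "C \<in> components L \<sigma>" and "\<sigma> \<in> Xs L" and "L \<ge> 1"
  shows "\<exists>f. corner_arc L \<sigma> C k f"
proof -
  obtain s where arc: "\<forall>j<6. face_around L v ((s + j) mod 6) \<in> C \<longleftrightarrow> j < k"
    using has_angle_arc(2)[OF assms(1)] by blast
  define f where "f j = face_around L v ((s + j) mod 6)" for j
  have "1 \<le> k" "k \<le> 5" using assms(1) by (auto simp: has_angle_def)
  have C: "f j \<in> C \<longleftrightarrow> j < k" if "j < 6" for j using arc that by (simp add: f_def)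
  have "corner_arc L \<sigma> C k f"
  proof
    show "f j \<in> Lam L" for j using face_around_in_Lam[OF assms(4)] by (simp add: f_def)
    show "f (Suc j) \<in> nbrs L (f j)" "f j \<in> nbrs L (f (Suc j))" for j
      using face_around_Suc_nbr face_around_nbr_Suc by (simp_all add: f_def)
    show "f (j + 2) = f j \<longleftrightarrow> L = 1" for j
      using face_around_add2_eq_iff[of L v "s + j"] by (simp add: f_def add.assoc)
    show "f (j + 6) = f j" for j by (simp add: f_def add.assoc[symmetric])
    show "\<sigma> (f j) = 1" if "j < k" for j
      using plus_site_of_component[OF assms(2)] C[of j] that \<open>k \<le> 5\<close> by (simp add: plus_sites_def)
    show "\<sigma> (f j) = -1" if "k \<le> j" "j < 6" for j
    proof (rule component_minus_if_touching[OF assms(2,3)])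
      show "f 0 \<in> C" and "f j \<notin> C" using C that \<open>1 \<le> k\<close> by auto
      show "f j \<in> Lam L" using face_around_in_Lam[OF assms(4)] by (simp add: f_def)
      show "face_verts L (f 0) \<inter> face_verts L (f j) \<noteq> {}"
        using vertex_in_face_around[OF has_angle_arc(1)[OF assms(1)]] by (auto simp: f_def)
    qed
  qed (use assms C in auto)
  then show ?thesis by blast
qed

context corner_arc
begin

lemma stab_eq_0_if_angle_5:
  assumes "k = 5" and "0 < h" and "h < J"
  shows "stab L J h \<sigma> = 0"
proof -
  have "f 5 \<noteq> f 3" using in_C[of 3] in_C[of 5] assms(1) by auto
  then have "L \<noteq> 1" using add2_eq[of 3] by simp
  then have "f 4 \<noteq> f 6" using add2_eq[of 4] by simp
  then have "Ham L J h (flip \<sigma> (f 5)) \<le> Ham L J h \<sigma> - J - h"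
    using assms prev_nbr[of 4] next_nbr[of 5] plus[of 4] plus[of 0] minus[of 5] period[of 0]
    by (intro Ham_flip_minus_two_plus_nbrs[OF L \<sigma> in_Lam, of 5 J "f 4" "f 0"]) auto
  then show ?thesis using assms by (intro stab_eq_0_of_downhill_flip[OF \<sigma> in_Lam[of 5]]) auto
qed

lemma stab_eq_0_if_angle_1:
  assumes "k = 1" and "0 < h" and "h < J"
  shows "stab L J h \<sigma> = 0"
proof -
  have "f 2 \<noteq> f 0" using in_C[of 0] in_C[of 2] assms(1) by auto
  then have "L \<noteq> 1" using add2_eq[of 0] by (metis add_0)
  then have "f 1 \<noteq> f 5" using add2_eq[of 5] period[of 1] by simp
  then have "Ham L J h (flip \<sigma> (f 0)) \<le> Ham L J h \<sigma> - J + h"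
    using assms next_nbr[of 0] prev_nbr[of 5] plus[of 0] minus[of 1] minus[of 5] period[of 0]
    by (intro Ham_flip_plus_two_minus_nbrs[OF L \<sigma> in_Lam, of 0 J "f 1" "f 5"]) auto
  then show ?thesis using assms by (intro stab_eq_0_of_downhill_flip[OF \<sigma> in_Lam[of 0]]) auto
qed

lemma stab_le_if_angle_4:
  assumes "k = 4" and "0 < h" and "h < J"
  shows "stab L J h \<sigma> \<le> ereal (J - h)"
proof -
  define \<sigma>' where "\<sigma>' = flip \<sigma> (f 4)"
  have cost: "Ham L J h \<sigma>' \<le> Ham L J h \<sigma> + (J - h)"
    using assms prev_nbr[of 3] plus[of 3] minus[of 4] unfolding \<sigma>'_def
    by (intro order.trans[OF Ham_flip_minus_plus_nbr[OF L \<sigma> in_Lam, of 4 J "f 3"]]) auto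
  have "f 5 \<noteq> f 3" using in_C[of 3] in_C[of 5] assms(1) by auto
  then have "L \<noteq> 1" using add2_eq[of 3] by simp
  then have "f 4 \<noteq> f 6" using add2_eq[of 4] by simp
  moreover have "f 5 \<noteq> f 4" using nbrs_not_self[OF next_nbr[of 4]] by simp
  moreover have "f 0 \<noteq> f 4" using in_C[of 0] in_C[of 4] assms(1) by auto
  ultimately have gain: "Ham L J h (flip \<sigma>' (f 5)) \<le> Ham L J h \<sigma>' - J - h"
    using assms prev_nbr[of 4] next_nbr[of 5] plus[of 0] minus[of 4] minus[of 5] period[of 0]
    unfolding \<sigma>'_def
    by (intro Ham_flip_minus_two_plus_nbrs[OF L flip_in_Xs[OF \<sigma> in_Lam[of 4]] in_Lam,
          of 5 J "f 4" "f 0"])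
      (auto simp: flip_def)
  show ?thesis using cost gain assms unfolding \<sigma>'_def
    by (intro stab_le_of_two_flips[OF \<sigma> in_Lam[of 4] in_Lam[of 5]]) auto
qed

end

theorem lemma4p2:
  fixes L :: nat and J h :: real and \<sigma> :: config
  assumes "L \<ge> 1" and "0 < h" and "h < J" and "\<sigma> \<in> Xs L"
  shows "((\<exists>C\<in>components L \<sigma>. \<exists>v. has_angle L C v 5 \<or> has_angle L C v 1) \<longrightarrow>
            stab L J h \<sigma> = 0 \<and> \<sigma> \<notin> Xabove L J h 0)
       \<and> ((\<exists>C\<in>components L \<sigma>. \<exists>v. has_angle L C v 4) \<longrightarrow>
            stab L J h \<sigma> \<le> ereal (J - h) \<and> \<sigma> \<notin> Xabove L J h (J - h))"
proof -
  have arc: "\<exists>f. corner_arc L \<sigma> C k f" if "C \<in> components L \<sigma>" and "has_angle L C v k" for C v k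
    using has_angle_corner_arc[OF that(2,1) assms(4,1)] .
  have "stab L J h \<sigma> = 0" if "\<exists>C\<in>components L \<sigma>. \<exists>v. has_angle L C v 5 \<or> has_angle L C v 1"
    using that arc assms(2,3) corner_arc.stab_eq_0_if_angle_5 corner_arc.stab_eq_0_if_angle_1 by metis
  moreover have "stab L J h \<sigma> \<le> ereal (J - h)" if "\<exists>C\<in>components L \<sigma>. \<exists>v. has_angle L C v 4"
    using that arc assms(2,3) corner_arc.stab_le_if_angle_4 by metis
  ultimately show ?thesis by (auto simp: Xabove_def not_less)
qed

end
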